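(* Let $S$ be a dense subsemigroup of $((0,\infty),+)$, let $(X,\langle T_s\rangle_{s\in S})$ be a dynamical system, let $L$ be a minimal left ideal of $O^{+}(S)$, and let $x\in X$. The following statements are equivalent: (a) $x$ is a uniformly recurrent point near zero of $(X,\langle T_s\rangle_{s\in S})$; (b) there exists $u\in L$ such that $T_u(x)=x$; (c) there exist $y\in X$ and an idempotent $u\in L$ such that $T_u(y)=x$; (d) there exists an idempotent $u\in L$ such that $T_u(x)=x$.
   Context: "Dense" means dense in the usual topology of $(0,\infty)$. $\beta S$ is the Stone–Čech compactification of the discrete set $S$ (the space of ultrafilters on $S$, principal ultrafilters identified with points of $S$), with the operation $+$ extended so that $(\beta S,+)$ is a compact right topological semigroup: for $p,q\in\beta S$ and $A\subseteq S$, $A\in p+q$ iff $\{x\in S: -x+A\in q\}\in p$, where $-x+A=\{y\in S: x+y\in A\}$. Define $O^{+}(S)=\{p\in\beta S: S\cap(0,\epsilon)\in p \text{ for every } \epsilon>0\}$; it is a compact right topological subsemigroup of $\beta S$. A dynamical system $(X,\langle T_s\rangle_{s\in S})$ consists of a compact Hausdorff space $X$ and continuous maps $T_s:X\to X$ ($s\in S$) with $T_s\circ T_t=T_{s+t}$ for all $s,t\in S$. For $p\in\beta S$ and $x\in X$, $T_p(x)=p\text{-}\lim_{s\in S}T_s(x)$ (i.e. $T_p=\tilde\theta(p)$ where $\tilde\theta:\beta S\to X^X$ is the continuous extension of $s\mapsto T_s$); then $T_p\circ T_q=T_{p+q}$. A subset $B\subseteq S$ is syndetic near zero iff for every $\epsilon>0$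 there exist a finite nonempty $F\subseteq (0,\epsilon)\cap S$ and $\delta>0$ such that $S\cap(0,\delta)\subseteq\bigcup_{t\in F}(-t+B)$. A point $x\in X$ is uniformly recurrent near zero iff for each neighbourhood $W$ of $x$, the set $\{s\in S: T_s(x)\in W\}$ is syndetic near zero. *)

theory Defs
  imports "HOL-Analysis.Analysis"
begin

text \<open>Ultrafilters on a set S of reals, represented as families of subsets of S
  (points of the Stone-Cech compactification beta S).\<close>
definition ultrafilter_on :: "real set \<Rightarrow> real set set \<Rightarrow> bool" where
  "ultrafilter_on S p \<longleftrightarrow>
     p \<subseteq> Pow S \<and> S \<in> p \<and> {} \<notin> p \<and>
     (\<forall>A\<in>p. \<forall>B\<in>p. A \<inter> B \<in> p) \<and>
     (\<forall>A\<in>p. \<forall>B. A \<subseteq> B \<and> B \<subseteq> S \<longrightarrow> B \<in> p) \<and>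
     (\<forall>A. A \<subseteq> S \<longrightarrow> A \<in> p \<or> S - A \<in> p)"

definition betaS :: "real set \<Rightarrow> real set set set" where
  "betaS S = {p. ultrafilter_on S p}"

definition lshift :: "real set \<Rightarrow> real \<Rightarrow> real set \<Rightarrow> real set" where
  "lshift S x A = {y\<in>S. x + y \<in> A}"

definition uplus :: "real set \<Rightarrow> real set set \<Rightarrow> real set set \<Rightarrow> real set set" where
  "uplus S p q = {A. A \<subseteq> S \<and> {x\<in>S. lshift S x A \<in> q} \<in> p}"

definition Oplus :: "real set \<Rightarrow> real set set set" where
  "Oplus S = {p\<in>betaS S. \<forall>\<epsilon>>0. S \<inter> {0<..<\<epsilon>} \<in> p}"

definition left_ideal_of :: "real set \<Rightarrow> real set set set \<Rightarrow> real set set set \<Rightarrow> bool" where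
  "left_ideal_of S M L \<longleftrightarrow> L \<noteq> {} \<and> L \<subseteq> M \<and> (\<forall>p\<in>M. \<forall>q\<in>L. uplus S p q \<in> L)"

definition minimal_left_ideal_of :: "real set \<Rightarrow> real set set set \<Rightarrow> real set set set \<Rightarrow> bool" where
  "minimal_left_ideal_of S M L \<longleftrightarrow> left_ideal_of S M L \<and>
     (\<forall>K. left_ideal_of S M K \<and> K \<subseteq> L \<longrightarrow> K = L)"

definition dense_subsemigroup :: "real set \<Rightarrow> bool" where
  "dense_subsemigroup S \<longleftrightarrow> S \<subseteq> {0<..} \<and> (\<forall>s\<in>S. \<forall>t\<in>S. s + t \<in> S) \<and>
     {0<..} \<subseteq> closure S"

text \<open>Dynamical system: compact Hausdorff space X (a compact subset of a Hausdorff
  type, with the subspace topology) and continuous maps T s : X \<rightarrow> X.\<close>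
definition dynamical_system :: "real set \<Rightarrow> 'a::t2_space set \<Rightarrow> (real \<Rightarrow> 'a \<Rightarrow> 'a) \<Rightarrow> bool" where
  "dynamical_system S X T \<longleftrightarrow> compact X \<and>
     (\<forall>s\<in>S. continuous_on X (T s) \<and> T s ` X \<subseteq> X) \<and>
     (\<forall>s\<in>S. \<forall>t\<in>S. \<forall>y\<in>X. T s (T t y) = T (s + t) y)"

definition plim :: "real set \<Rightarrow> real set set \<Rightarrow> (real \<Rightarrow> 'a::t2_space) \<Rightarrow> 'a" where
  "plim S p f = (THE z. \<forall>W. open W \<and> z \<in> W \<longrightarrow> {s\<in>S. f s \<in> W} \<in> p)"

definition Tp :: "real set \<Rightarrow> (real \<Rightarrow> 'a \<Rightarrow> 'a::t2_space) \<Rightarrow> real set set \<Rightarrow> 'a \<Rightarrow> 'a" where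
  "Tp S T p x = plim S p (\<lambda>s. T s x)"

definition syndetic_near_zero :: "real set \<Rightarrow> real set \<Rightarrow> bool" where
  "syndetic_near_zero S B \<longleftrightarrow>
     (\<forall>\<epsilon>>0. \<exists>F. finite F \<and> F \<noteq> {} \<and> F \<subseteq> {0<..<\<epsilon>} \<inter> S \<and>
        (\<exists>\<delta>>0. S \<inter> {0<..<\<delta>} \<subseteq> (\<Union>t\<in>F. lshift S t B)))"

definition unif_recurrent_near_zero :: "real set \<Rightarrow> (real \<Rightarrow> 'a \<Rightarrow> 'a::t2_space) \<Rightarrow> 'a \<Rightarrow> bool" where
  "unif_recurrent_near_zero S T x \<longleftrightarrow>
     (\<forall>W. open W \<and> x \<in> W \<longrightarrow> syndetic_near_zero S {s\<in>S. T s x \<in> W})"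

end

theory Submission
  imports Defs
begin

text \<open>Everything rests on a dual description of syndeticity near zero: \<open>B\<close> is syndetic near
  zero iff every \<open>q \<in> O\<^sup>+(S)\<close> contains \<open>-t + B\<close> for arbitrarily small \<open>t \<in> S\<close>.

  (a)\<open>\<Rightarrow>\<close>(b): fix \<open>r \<in> L\<close>. By the description, the sets \<open>{t. -t + B\<^sub>W \<in> r} \<inter> (0,\<epsilon>)\<close>, with
  \<open>B\<^sub>W\<close> the times of return of \<open>x\<close> to a neighbourhood \<open>W\<close>, form a filter base; an ultrafilter
  \<open>q \<in> O\<^sup>+(S)\<close> refining it gives \<open>q + r \<in> L\<close> with \<open>T\<^bsub>q+r\<^esub> x = x\<close>.
  (b)\<open>\<Rightarrow>\<close>(d): the elements of \<open>L\<close> fixing \<open>x\<close> form a nonempty closed subsemigroup of \<open>\<beta>S\<close>,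
  which contains an idempotent by the Ellis--Numakura lemma.
  (c)\<open>\<Rightarrow>\<close>(d): \<open>T\<^sub>u x = T\<^sub>u (T\<^sub>u y) = T\<^bsub>u+u\<^esub> y = x\<close>.
  (b)\<open>\<Rightarrow>\<close>(a): for \<open>T\<^sub>u x = x\<close> and \<open>V\<close> a neighbourhood of \<open>x\<close> separated from \<open>X - W\<close>, the
  set \<open>D = {z. -z + B\<^sub>V \<in> u}\<close> lies in \<open>B\<^sub>W\<close>, and it is syndetic near zero: given
  \<open>q \<in> O\<^sup>+(S)\<close>, minimality of \<open>L\<close> writes \<open>u = p + (q + u)\<close> with \<open>p \<in> O\<^sup>+(S)\<close>, and a small
  \<open>t\<close> with \<open>T\<^sub>t (T\<^bsub>q+u\<^esub> x) \<in> V\<close> yields \<open>-t + D \<in> q\<close>.\<close>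

section \<open>Ultrafilters on a set of reals\<close>

definition filter_on :: "real set \<Rightarrow> real set set \<Rightarrow> bool" where
  "filter_on S F \<longleftrightarrow>
     F \<subseteq> Pow S \<and> S \<in> F \<and> {} \<notin> F \<and>
     (\<forall>A\<in>F. \<forall>B\<in>F. A \<inter> B \<in> F) \<and>
     (\<forall>A\<in>F. \<forall>B. A \<subseteq> B \<and> B \<subseteq> S \<longrightarrow> B \<in> F)"

lemma
  assumes "filter_on S F"
  shows filter_on_subset: "A \<in> F \<Longrightarrow> A \<subseteq> S"
    and filter_on_carrier: "S \<in> F"
    and filter_on_empty: "{} \<notin> F"
    and filter_on_Int: "A \<in> F \<Longrightarrow> B \<in> F \<Longrightarrow> A \<inter> B \<in> F"
    and filter_on_mono: "A \<in> F \<Longrightarrow> A \<subseteq> B \<Longrightarrow> B \<subseteq> S \<Longrightarrow> B \<in> F"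
  using assms unfolding filter_on_def by (elim conjE; blast)+

lemma filter_onI:
  assumes "F \<subseteq> Pow S" "S \<in> F" "{} \<notin> F" "\<And>A B. A \<in> F \<Longrightarrow> B \<in> F \<Longrightarrow> A \<inter> B \<in> F"
    and "\<And>A B. A \<in> F \<Longrightarrow> A \<subseteq> B \<Longrightarrow> B \<subseteq> S \<Longrightarrow> B \<in> F"
  shows "filter_on S F"
  unfolding filter_on_def using assms by blast

lemma ultrafilter_on_iff:
  "ultrafilter_on S p \<longleftrightarrow> filter_on S p \<and> (\<forall>A. A \<subseteq> S \<longrightarrow> A \<in> p \<or> S - A \<in> p)"
  unfolding ultrafilter_on_def filter_on_def by (rule iffI; elim conjE; intro conjI; assumption)

lemma uf_filter_on: "ultrafilter_on S p \<Longrightarrow> filter_on S p"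
  by (simp add: ultrafilter_on_iff)

lemmas uf_subset = filter_on_subset[OF uf_filter_on]
  and uf_carrier = filter_on_carrier[OF uf_filter_on]
  and uf_empty = filter_on_empty[OF uf_filter_on]
  and uf_Int = filter_on_Int[OF uf_filter_on]
  and uf_mono = filter_on_mono[OF uf_filter_on]

lemma uf_compl: "ultrafilter_on S p \<Longrightarrow> A \<subseteq> S \<Longrightarrow> A \<in> p \<or> S - A \<in> p"
  by (simp add: ultrafilter_on_iff)

lemma uf_nonempty: "ultrafilter_on S p \<Longrightarrow> A \<in> p \<Longrightarrow> A \<noteq> {}"
  using uf_empty by blast

lemma uf_Diff_iff:
  assumes p: "ultrafilter_on S p" and A: "A \<subseteq> S"
  shows "S - A \<in> p \<longleftrightarrow> A \<notin> p"
proof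
  assume "S - A \<in> p"
  show "A \<notin> p"
  proof
    assume "A \<in> p"
    then have "A \<inter> (S - A) \<in> p" using \<open>S - A \<in> p\<close> by (rule uf_Int[OF p])
    then show False using uf_empty[OF p] by simp
  qed
qed (use uf_compl[OF p A] in blast)

lemma uf_Int_iff:
  assumes p: "ultrafilter_on S p" and "A \<subseteq> S" "B \<subseteq> S"
  shows "A \<inter> B \<in> p \<longleftrightarrow> A \<in> p \<and> B \<in> p"
  using uf_Int[OF p] uf_mono[OF p _ Int_lower1 \<open>A \<subseteq> S\<close>] uf_mono[OF p _ Int_lower2 \<open>B \<subseteq> S\<close>]
  by blast

lemma uf_finite_Union:
  assumes p: "ultrafilter_on S p" and "finite F" and "\<forall>A\<in>F. A \<subseteq> S" and "\<Union>F \<in> p"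
  shows "\<exists>A\<in>F. A \<in> p"
  using assms(2-)
proof (induction F rule: finite_induct)
  case empty
  then show ?case using uf_empty[OF p] by simp
next
  case (insert A F)
  show ?case
  proof (cases "A \<in> p")
    case False
    then have "S - A \<in> p" using uf_Diff_iff[OF p] insert.prems(1) by simp
    then have "(S - A) \<inter> \<Union>(insert A F) \<in> p" using uf_Int[OF p] insert.prems(2) by simp
    then have "\<Union>F \<in> p" by (rule uf_mono[OF p]) (use insert.prems(1) in auto)
    then show ?thesis using insert by simp
  qed simp
qed

lemma uf_eqI:
  assumes p: "ultrafilter_on S p" and q: "ultrafilter_on S q" and "p \<subseteq> q"
  shows "p = q"
proof (rule antisym)
  show "q \<subseteq> p"
  proof
    fix A assume "A \<in> q"
    then have "S - A \<notin> q" using uf_Diff_iff[OF q uf_subset[OF q]] by blast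
    then show "A \<in> p" using uf_Diff_iff[OF p uf_subset[OF q \<open>A \<in> q\<close>]] \<open>p \<subseteq> q\<close> by blast
  qed
qed fact

lemma filter_on_Union_chain:
  assumes "\<C> \<noteq> {}" and filters: "\<And>G. G \<in> \<C> \<Longrightarrow> filter_on S G"
    and chain: "\<And>G H. G \<in> \<C> \<Longrightarrow> H \<in> \<C> \<Longrightarrow> G \<subseteq> H \<or> H \<subseteq> G"
  shows "filter_on S (\<Union>\<C>)"
proof (rule filter_onI)
  obtain G0 where "G0 \<in> \<C>" using \<open>\<C> \<noteq> {}\<close> by blast
  show "\<Union>\<C> \<subseteq> Pow S" using filters filter_on_subset by blast
  show "S \<in> \<Union>\<C>" using filters \<open>G0 \<in> \<C>\<close> filter_on_carrier by blast
  show "{} \<notin> \<Union>\<C>" using filters filter_on_empty by blast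
next
  fix A B assume "A \<in> \<Union>\<C>" "B \<in> \<Union>\<C>"
  then obtain G H where GH: "G \<in> \<C>" "H \<in> \<C>" "A \<in> G" "B \<in> H" by blast
  show "A \<inter> B \<in> \<Union>\<C>"
  proof (cases "G \<subseteq> H")
    case True
    then show ?thesis using GH filter_on_Int[OF filters] by blast
  next
    case False
    then have "H \<subseteq> G" using chain GH by blast
    then show ?thesis using GH filter_on_Int[OF filters] by blast
  qed
next
  fix A B assume "A \<in> \<Union>\<C>" "A \<subseteq> B" "B \<subseteq> S"
  then show "B \<in> \<Union>\<C>" using filter_on_mono[OF filters] by blast
qed

text \<open>If \<open>A\<close> meets every member of \<open>M\<close>, the sets containing some \<open>C \<inter> A\<close> with \<open>C \<in> M\<close> form a
  filter extending \<open>M\<close> and containing \<open>A\<close>; otherwise some \<open>C \<in> M\<close> lies in \<open>S - A\<close>.\<close>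
lemma maximal_filter_on_ultrafilter:
  assumes M: "filter_on S M" and max: "\<And>G. filter_on S G \<Longrightarrow> M \<subseteq> G \<Longrightarrow> G = M"
  shows "ultrafilter_on S M"
proof -
  have "A \<in> M \<or> S - A \<in> M" if A: "A \<subseteq> S" for A
  proof (cases "\<forall>C\<in>M. C \<inter> A \<noteq> {}")
    case True
    let ?G = "{B. B \<subseteq> S \<and> (\<exists>C\<in>M. C \<inter> A \<subseteq> B)}"
    have "filter_on S ?G"
    proof (rule filter_onI)
      show "S \<in> ?G" using filter_on_carrier[OF M] by blast
      show "{} \<notin> ?G" using True by blast
    next
      fix B1 B2 assume "B1 \<in> ?G" "B2 \<in> ?G"
      then obtain C1 C2 where "C1 \<in> M" "C2 \<in> M" "C1 \<inter> A \<subseteq> B1" "C2 \<inter> A \<subseteq> B2"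
        "B1 \<subseteq> S" "B2 \<subseteq> S"
        by blast
      moreover have "C1 \<inter> C2 \<in> M" using filter_on_Int[OF M] \<open>C1 \<in> M\<close> \<open>C2 \<in> M\<close> .
      ultimately show "B1 \<inter> B2 \<in> ?G" by blast
    next
      fix B1 B2 assume "B1 \<in> ?G" "B1 \<subseteq> B2" "B2 \<subseteq> S"
      then obtain C where "C \<in> M" "C \<inter> A \<subseteq> B2" by blast
      then show "B2 \<in> ?G" using \<open>B2 \<subseteq> S\<close> by blast
    qed blast
    moreover have "M \<subseteq> ?G" using filter_on_subset[OF M] by blast
    ultimately have "?G = M" by (rule max)
    moreover have "A \<in> ?G" using A filter_on_carrier[OF M] by blast
    ultimately show ?thesis by blast
  next
    case False
    then obtain C where "C \<in> M" "C \<subseteq> S - A" using filter_on_subset[OF M] by blast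
    then show ?thesis using filter_on_mono[OF M] by blast
  qed
  then show ?thesis using M by (simp add: ultrafilter_on_iff)
qed

lemma ultrafilter_exists:
  assumes F: "filter_on S F"
  shows "\<exists>p. ultrafilter_on S p \<and> F \<subseteq> p"
proof -
  let ?A = "{G. filter_on S G \<and> F \<subseteq> G}"
  have "\<exists>M\<in>?A. \<forall>G\<in>?A. M \<subseteq> G \<longrightarrow> G = M"
  proof (rule subset_Zorn_nonempty)
    show "?A \<noteq> {}" using F by blast
    fix \<C> assume "\<C> \<noteq> {}" and "subset.chain ?A \<C>"
    then have "filter_on S (\<Union>\<C>)"
      by (intro filter_on_Union_chain) (auto simp: subset_chain_def)
    moreover obtain G0 where "G0 \<in> \<C>" using \<open>\<C> \<noteq> {}\<close> by blast
    then have "F \<subseteq> \<Union>\<C>" using \<open>subset.chain ?A \<C>\<close> by (auto simp: subset_chain_def)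
    ultimately show "\<Union>\<C> \<in> ?A" by simp
  qed
  then obtain M where "M \<in> ?A" and max: "\<forall>G\<in>?A. M \<subseteq> G \<longrightarrow> G = M" ..
  then have "ultrafilter_on S M"
    by (intro maximal_filter_on_ultrafilter) (use max in auto)
  then show ?thesis using \<open>M \<in> ?A\<close> by blast
qed

lemma ultrafilter_exists_base:
  assumes B: "B \<subseteq> Pow S" "B \<noteq> {}" "{} \<notin> B"
    and dir: "\<And>A C. A \<in> B \<Longrightarrow> C \<in> B \<Longrightarrow> \<exists>D\<in>B. D \<subseteq> A \<inter> C"
  shows "\<exists>p. ultrafilter_on S p \<and> B \<subseteq> p"
proof -
  let ?F = "{A. A \<subseteq> S \<and> (\<exists>C\<in>B. C \<subseteq> A)}"
  have "filter_on S ?F"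
  proof (rule filter_onI)
    show "S \<in> ?F" using B(1,2) by blast
    show "{} \<notin> ?F" using B(3) by auto
  next
    fix A1 A2 assume "A1 \<in> ?F" "A2 \<in> ?F"
    then obtain C1 C2 where C: "C1 \<in> B" "C2 \<in> B" "C1 \<subseteq> A1" "C2 \<subseteq> A2" and "A1 \<subseteq> S"
      by blast
    obtain D where "D \<in> B" "D \<subseteq> C1 \<inter> C2" using dir[OF C(1,2)] ..
    then have "D \<subseteq> A1 \<inter> A2" using C(3,4) by blast
    then show "A1 \<inter> A2 \<in> ?F" using \<open>D \<in> B\<close> \<open>A1 \<subseteq> S\<close> by auto
  next
    fix A1 A2 assume "A1 \<in> ?F" "A1 \<subseteq> A2" "A2 \<subseteq> S"
    then obtain C where "C \<in> B" "C \<subseteq> A2" by blast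
    then show "A2 \<in> ?F" using \<open>A2 \<subseteq> S\<close> by blast
  qed auto
  then obtain p where "ultrafilter_on S p" "?F \<subseteq> p" using ultrafilter_exists by blast
  moreover have "B \<subseteq> ?F" using B(1) by blast
  ultimately show ?thesis by blast
qed

section \<open>The semigroup \<open>(\<beta>S, +)\<close> and its subsemigroup \<open>O\<^sup>+(S)\<close>\<close>

definition add_closed :: "real set \<Rightarrow> bool" where
  "add_closed S \<longleftrightarrow> (\<forall>s\<in>S. \<forall>t\<in>S. s + t \<in> S)"

lemma add_closedD: "add_closed S \<Longrightarrow> s \<in> S \<Longrightarrow> t \<in> S \<Longrightarrow> s + t \<in> S"
  unfolding add_closed_def by blast

lemma dense_subsemigroupD:
  assumes "dense_subsemigroup S"
  shows "add_closed S" "S \<subseteq> {0<..}" "\<And>e. e > 0 \<Longrightarrow> S \<inter> {0<..<e} \<noteq> {}"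
proof -
  show "add_closed S" "S \<subseteq> {0<..}" using assms unfolding dense_subsemigroup_def add_closed_def by blast+
  fix e :: real assume "e > 0"
  then have "e/2 \<in> closure S" using assms unfolding dense_subsemigroup_def by auto
  then obtain y where "y \<in> S" "dist y (e/2) < e/2"
    using \<open>e > 0\<close> unfolding closure_approachable by (metis half_gt_zero)
  then have "y \<in> S \<inter> {0<..<e}" by (auto simp: dist_real_def abs_less_iff field_simps)
  then show "S \<inter> {0<..<e} \<noteq> {}" by blast
qed

lemma lshift_subset: "lshift S x A \<subseteq> S"
  unfolding lshift_def by blast

lemma lshift_mono: "A \<subseteq> B \<Longrightarrow> lshift S x A \<subseteq> lshift S x B"
  unfolding lshift_def by blast

lemma lshift_Int: "lshift S x (A \<inter> B) = lshift S x A \<inter> lshift S x B"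
  unfolding lshift_def by blast

lemma lshift_carrier: "add_closed S \<Longrightarrow> x \<in> S \<Longrightarrow> lshift S x S = S"
  unfolding lshift_def using add_closedD by blast

lemma lshift_Diff: "add_closed S \<Longrightarrow> x \<in> S \<Longrightarrow> lshift S x (S - A) = S - lshift S x A"
  unfolding lshift_def using add_closedD by blast

lemma lshift_lshift:
  "add_closed S \<Longrightarrow> s \<in> S \<Longrightarrow> t \<in> S \<Longrightarrow> lshift S s (lshift S t A) = lshift S (t + s) A"
  unfolding lshift_def using add_closedD by (auto simp: add.assoc)

lemma uplus_iff: "A \<in> uplus S p q \<longleftrightarrow> A \<subseteq> S \<and> {x\<in>S. lshift S x A \<in> q} \<in> p"
  unfolding uplus_def by simp

lemma ultrafilter_on_preimage:
  assumes p: "ultrafilter_on S p"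
    and D: "\<And>A. D A \<subseteq> S" "D S = S" "\<And>A B. D (A \<inter> B) = D A \<inter> D B"
      "\<And>A. A \<subseteq> S \<Longrightarrow> D (S - A) = S - D A"
  shows "ultrafilter_on S {A. A \<subseteq> S \<and> D A \<in> p}" (is "ultrafilter_on S ?q")
proof -
  have mono: "D A \<subseteq> D B" if "A \<subseteq> B" for A B
    using D(3)[of A B] that by (simp add: Int_absorb2) (use Int_lower2 in blast)
  have "D {} = {}" using D(2) D(4)[of S] by simp
  show ?thesis
    unfolding ultrafilter_on_def
  proof (intro conjI ballI allI impI)
    show "S \<in> ?q" using D(2) uf_carrier[OF p] by simp
    show "{} \<notin> ?q" using \<open>D {} = {}\<close> uf_empty[OF p] by simp
  next
    fix A B assume "A \<in> ?q" "B \<in> ?q"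
    then have "A \<subseteq> S" "D A \<in> p" "D B \<in> p" by simp_all
    then have "D (A \<inter> B) \<in> p" unfolding D(3) by (intro uf_Int[OF p])
    then show "A \<inter> B \<in> ?q" using \<open>A \<subseteq> S\<close> by auto
  next
    fix A B assume "A \<in> ?q" "A \<subseteq> B \<and> B \<subseteq> S"
    then have "D A \<in> p" and AB: "A \<subseteq> B" by simp_all
    then have "D B \<in> p" using uf_mono[OF p _ mono[OF AB] D(1)] by simp
    then show "B \<in> ?q" using \<open>A \<subseteq> B \<and> B \<subseteq> S\<close> by simp
  next
    fix A assume "A \<subseteq> S"
    then show "A \<in> ?q \<or> S - A \<in> ?q"
      using uf_compl[OF p D(1)] D(4) by auto
  qed blast
qed

lemma ultrafilter_uplus:
  assumes S: "add_closed S" and p: "ultrafilter_on S p" and q: "ultrafilter_on S q"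
  shows "ultrafilter_on S (uplus S p q)"
proof -
  let ?D = "\<lambda>A. {x\<in>S. lshift S x A \<in> q}"
  have "ultrafilter_on S {A. A \<subseteq> S \<and> ?D A \<in> p}"
  proof (rule ultrafilter_on_preimage[OF p])
    show "?D S = S" using lshift_carrier[OF S] uf_carrier[OF q] by auto
    show "?D (A \<inter> B) = ?D A \<inter> ?D B" for A B
      using uf_Int_iff[OF q lshift_subset lshift_subset] by (auto simp: lshift_Int)
    show "?D (S - A) = S - ?D A" for A
      using uf_Diff_iff[OF q lshift_subset] lshift_Diff[OF S] by auto
  qed auto
  then show ?thesis unfolding uplus_def .
qed

lemma lshift_Collect_lshift:
  assumes S: "add_closed S" and t: "t \<in> S"
  shows "lshift S t {s\<in>S. lshift S s A \<in> q} = {s\<in>S. lshift S s (lshift S t A) \<in> q}"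
  unfolding lshift_def using add_closedD[OF S t] lshift_lshift[OF S _ t, of _ A]
  by (auto simp: lshift_def)

lemma uplus_assoc:
  assumes S: "add_closed S"
  shows "uplus S (uplus S p q) r = uplus S p (uplus S q r)"
proof -
  have "{y\<in>S. lshift S y {x\<in>S. lshift S x A \<in> r} \<in> q} = {y\<in>S. lshift S y A \<in> uplus S q r}" for A
    using lshift_subset by (auto simp: lshift_Collect_lshift[OF S] uplus_iff)
  then show ?thesis
    by (intro set_eqI) (auto simp: uplus_iff)
qed

lemma Oplus_iff: "p \<in> Oplus S \<longleftrightarrow> ultrafilter_on S p \<and> (\<forall>e>0. S \<inter> {0<..<e} \<in> p)"
  unfolding Oplus_def betaS_def by simp

lemma Oplus_ultrafilter: "p \<in> Oplus S \<Longrightarrow> ultrafilter_on S p"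
  by (simp add: Oplus_iff)

lemma Oplus_uplus:
  assumes S: "add_closed S" "S \<subseteq> {0<..}" and p: "p \<in> Oplus S" and q: "q \<in> Oplus S"
  shows "uplus S p q \<in> Oplus S"
  unfolding Oplus_iff
proof (intro conjI allI impI)
  have up: "ultrafilter_on S p" and uq: "ultrafilter_on S q" using p q by (simp_all add: Oplus_iff)
  show "ultrafilter_on S (uplus S p q)" by (rule ultrafilter_uplus[OF S(1) up uq])
  fix e :: real assume "e > 0"
  then have half: "S \<inter> {0<..<e/2} \<in> p" "S \<inter> {0<..<e/2} \<in> q" using p q by (simp_all add: Oplus_iff)
  have "S \<inter> {0<..<e/2} \<subseteq> {x\<in>S. lshift S x (S \<inter> {0<..<e}) \<in> q}"
  proof
    fix x assume x: "x \<in> S \<inter> {0<..<e/2}"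
    have "S \<inter> {0<..<e/2} \<subseteq> lshift S x (S \<inter> {0<..<e})"
      unfolding lshift_def using x S add_closedD[OF S(1)] by auto
    then have "lshift S x (S \<inter> {0<..<e}) \<in> q" using uf_mono[OF uq half(2) _ lshift_subset] by blast
    then show "x \<in> {x\<in>S. lshift S x (S \<inter> {0<..<e}) \<in> q}" using x by blast
  qed
  then have "{x\<in>S. lshift S x (S \<inter> {0<..<e}) \<in> q} \<in> p" using uf_mono[OF up half(1)] by blast
  then show "S \<inter> {0<..<e} \<in> uplus S p q" unfolding uplus_iff by blast
qed

lemma Oplus_ultrafilter_exists:
  assumes "\<G> \<subseteq> Pow S" "\<G> \<noteq> {}"
    and meets: "\<And>G e. G \<in> \<G> \<Longrightarrow> e > 0 \<Longrightarrow> G \<inter> {0<..<e} \<noteq> {}"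
    and directed: "\<And>G1 G2. G1 \<in> \<G> \<Longrightarrow> G2 \<in> \<G> \<Longrightarrow> \<exists>G3\<in>\<G>. G3 \<subseteq> G1 \<inter> G2"
  shows "\<exists>q\<in>Oplus S. \<G> \<subseteq> q"
proof -
  let ?\<F> = "{G \<inter> {0<..<e} | G e. G \<in> \<G> \<and> e > 0}"
  have "\<exists>q. ultrafilter_on S q \<and> ?\<F> \<subseteq> q"
  proof (rule ultrafilter_exists_base)
    show "?\<F> \<subseteq> Pow S" using assms(1) by blast
    show "?\<F> \<noteq> {}" using \<open>\<G> \<noteq> {}\<close> zero_less_one by blast
    show "{} \<notin> ?\<F>"
    proof
      assume "{} \<in> ?\<F>"
      then obtain G e where "G \<in> \<G>" "e > 0" "G \<inter> {0<..<e} = {}" by blast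
      then show False using meets by blast
    qed
    fix A1 A2 assume "A1 \<in> ?\<F>" "A2 \<in> ?\<F>"
    then obtain G1 e1 G2 e2 where A: "A1 = G1 \<inter> {0<..<e1}" "A2 = G2 \<inter> {0<..<e2}"
      and G: "G1 \<in> \<G>" "G2 \<in> \<G>" and "e1 > 0" "e2 > 0"
      by blast
    obtain G3 where "G3 \<in> \<G>" "G3 \<subseteq> G1 \<inter> G2" using directed[OF G] ..
    then have "G3 \<inter> {0<..<min e1 e2} \<in> ?\<F>"
      using \<open>e1 > 0\<close> \<open>e2 > 0\<close> by (intro CollectI exI[of _ G3] exI[of _ "min e1 e2"]) auto
    moreover have "G3 \<inter> {0<..<min e1 e2} \<subseteq> A1 \<inter> A2" unfolding A using \<open>G3 \<subseteq> G1 \<inter> G2\<close> by auto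
    ultimately show "\<exists>A\<in>?\<F>. A \<subseteq> A1 \<inter> A2" by (rule bexI[rotated])
  qed
  then obtain q where q: "ultrafilter_on S q" "?\<F> \<subseteq> q" by blast
  have mem: "G \<inter> {0<..<e} \<in> q" if "G \<in> \<G>" "e > 0" for G e
    using q(2) that by blast
  obtain G0 where "G0 \<in> \<G>" using \<open>\<G> \<noteq> {}\<close> by blast
  have "q \<in> Oplus S"
    unfolding Oplus_iff
  proof (intro conjI allI impI)
    fix e :: real assume "e > 0"
    show "S \<inter> {0<..<e} \<in> q"
      by (rule uf_mono[OF q(1) mem[OF \<open>G0 \<in> \<G>\<close> \<open>e > 0\<close>]]) (use \<open>G0 \<in> \<G>\<close> assms(1) in auto)
  qed (rule q(1))
  moreover have "G \<in> q" if "G \<in> \<G>" for G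
    by (rule uf_mono[OF q(1) mem[OF that zero_less_one]]) (use that assms(1) in auto)
  ultimately show ?thesis by blast
qed

section \<open>Closed subsets of \<open>\<beta>S\<close> and the Ellis--Numakura lemma\<close>

text \<open>\<open>N\<close> is closed iff it contains every ultrafilter \<open>p\<close> each of whose members lies in some
  \<open>q \<in> N\<close>, i.e.\ every \<open>p\<close> each of whose basic neighbourhoods \<open>{q. A \<in> q}\<close> meets \<open>N\<close>.\<close>
definition beta_closed :: "real set \<Rightarrow> real set set set \<Rightarrow> bool" where
  "beta_closed S N \<longleftrightarrow>
     N \<subseteq> betaS S \<and> (\<forall>p. ultrafilter_on S p \<and> (\<forall>A\<in>p. \<exists>q\<in>N. A \<in> q) \<longrightarrow> p \<in> N)"

lemma beta_closedI:
  "(\<And>q. q \<in> N \<Longrightarrow> ultrafilter_on S q) \<Longrightarrow>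
   (\<And>p. ultrafilter_on S p \<Longrightarrow> (\<And>A. A \<in> p \<Longrightarrow> \<exists>q\<in>N. A \<in> q) \<Longrightarrow> p \<in> N) \<Longrightarrow> beta_closed S N"
  unfolding beta_closed_def betaS_def by blast

lemma beta_closedD:
  "beta_closed S N \<Longrightarrow> ultrafilter_on S p \<Longrightarrow> (\<And>A. A \<in> p \<Longrightarrow> \<exists>q\<in>N. A \<in> q) \<Longrightarrow> p \<in> N"
  unfolding beta_closed_def by blast

lemma beta_closed_ultrafilter: "beta_closed S N \<Longrightarrow> q \<in> N \<Longrightarrow> ultrafilter_on S q"
  unfolding beta_closed_def betaS_def by blast

lemma beta_closed_Inter:
  assumes "\<C> \<noteq> {}" and closed: "\<And>N. N \<in> \<C> \<Longrightarrow> beta_closed S N"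
  shows "beta_closed S (\<Inter>\<C>)"
proof (rule beta_closedI)
  obtain N0 where "N0 \<in> \<C>" using \<open>\<C> \<noteq> {}\<close> by blast
  then show "ultrafilter_on S q" if "q \<in> \<Inter>\<C>" for q
    using that beta_closed_ultrafilter[OF closed] by blast
  fix p assume p: "ultrafilter_on S p" and near: "\<And>A. A \<in> p \<Longrightarrow> \<exists>q\<in>\<Inter>\<C>. A \<in> q"
  show "p \<in> \<Inter>\<C>"
  proof
    fix N assume "N \<in> \<C>"
    show "p \<in> N"
      by (rule beta_closedD[OF closed[OF \<open>N \<in> \<C>\<close>] p]) (use near \<open>N \<in> \<C>\<close> in blast)
  qed
qed

lemma beta_closed_Int: "beta_closed S M \<Longrightarrow> beta_closed S N \<Longrightarrow> beta_closed S (M \<inter> N)"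
  using beta_closed_Inter[of "{M, N}" S] by auto

lemma beta_closed_Int_member:
  assumes N: "beta_closed S N" and B: "B \<subseteq> S"
  shows "beta_closed S (N \<inter> {q. B \<in> q})"
proof (rule beta_closedI)
  show "ultrafilter_on S q" if "q \<in> N \<inter> {q. B \<in> q}" for q
    using that beta_closed_ultrafilter[OF N] by blast
  fix p assume p: "ultrafilter_on S p" and near: "\<And>A. A \<in> p \<Longrightarrow> \<exists>q\<in>N \<inter> {q. B \<in> q}. A \<in> q"
  have "p \<in> N" by (rule beta_closedD[OF N p]) (use near in blast)
  moreover have "B \<in> p"
  proof (rule ccontr)
    assume "B \<notin> p"
    then have "S - B \<in> p" using uf_Diff_iff[OF p B] by simp
    then obtain q where "q \<in> N" "B \<in> q" "S - B \<in> q" using near by blast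
    then show False using uf_Diff_iff[OF beta_closed_ultrafilter[OF N] B] by blast
  qed
  ultimately show "p \<in> N \<inter> {q. B \<in> q}" by simp
qed

lemma Oplus_beta_closed: "beta_closed S (Oplus S)"
proof (rule beta_closedI)
  show "ultrafilter_on S q" if "q \<in> Oplus S" for q
    using that by (rule Oplus_ultrafilter)
  fix p assume p: "ultrafilter_on S p" and near: "\<And>A. A \<in> p \<Longrightarrow> \<exists>q\<in>Oplus S. A \<in> q"
  have "S \<inter> {0<..<e} \<in> p" if "e > 0" for e :: real
  proof (rule ccontr)
    assume "S \<inter> {0<..<e} \<notin> p"
    then have "S - S \<inter> {0<..<e} \<in> p" using uf_Diff_iff[OF p] by blast
    then obtain q where "q \<in> Oplus S" "S - S \<inter> {0<..<e} \<in> q" using near by blast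
    then show False using \<open>e > 0\<close> uf_Diff_iff[of S q "S \<inter> {0<..<e}"] by (auto simp: Oplus_iff)
  qed
  then show "p \<in> Oplus S" using p by (simp add: Oplus_iff)
qed

lemma filter_on_common_members:
  assumes "\<N> \<noteq> {}" and uf: "\<And>N q. N \<in> \<N> \<Longrightarrow> q \<in> N \<Longrightarrow> ultrafilter_on S q"
    and nonempty: "\<And>N. N \<in> \<N> \<Longrightarrow> N \<noteq> {}"
    and directed: "\<And>N1 N2. N1 \<in> \<N> \<Longrightarrow> N2 \<in> \<N> \<Longrightarrow> \<exists>N3\<in>\<N>. N3 \<subseteq> N1 \<inter> N2"
  shows "filter_on S {A. A \<subseteq> S \<and> (\<exists>N\<in>\<N>. \<forall>q\<in>N. A \<in> q)}" (is "filter_on S ?F")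
proof (rule filter_onI)
  show "?F \<subseteq> Pow S" by blast
  obtain N where "N \<in> \<N>" using \<open>\<N> \<noteq> {}\<close> by blast
  then show "S \<in> ?F" using uf uf_carrier by blast
  show "{} \<notin> ?F" using nonempty uf uf_empty by blast
next
  fix A B assume "A \<in> ?F" "B \<in> ?F"
  then obtain N1 N2 where N: "N1 \<in> \<N>" "N2 \<in> \<N>" "\<forall>q\<in>N1. A \<in> q" "\<forall>q\<in>N2. B \<in> q"
    and "A \<subseteq> S" by blast
  obtain N3 where "N3 \<in> \<N>" "N3 \<subseteq> N1 \<inter> N2" using directed[OF N(1,2)] ..
  have "A \<inter> B \<in> q" if "q \<in> N3" for q
  proof -
    have "q \<in> N1" "q \<in> N2" using that \<open>N3 \<subseteq> N1 \<inter> N2\<close> by blast+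
    then show ?thesis using N(3,4) by (intro uf_Int[OF uf[OF \<open>N3 \<in> \<N>\<close> that]]) simp_all
  qed
  then show "A \<inter> B \<in> ?F" using \<open>N3 \<in> \<N>\<close> \<open>A \<subseteq> S\<close> by auto
next
  fix A B assume "A \<in> ?F" "A \<subseteq> B" "B \<subseteq> S"
  then obtain N where "N \<in> \<N>" "\<forall>q\<in>N. A \<in> q" by blast
  then have "\<forall>q\<in>N. B \<in> q" using uf_mono[OF uf _ \<open>A \<subseteq> B\<close> \<open>B \<subseteq> S\<close>] by simp
  then show "B \<in> ?F" using \<open>N \<in> \<N>\<close> \<open>B \<subseteq> S\<close> by auto
qed

text \<open>Compactness of \<open>\<beta>S\<close>.\<close>
lemma beta_closed_Inter_nonempty:
  assumes "\<N> \<noteq> {}" and closed: "\<And>N. N \<in> \<N> \<Longrightarrow> beta_closed S N"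
    and nonempty: "\<And>N. N \<in> \<N> \<Longrightarrow> N \<noteq> {}"
    and directed: "\<And>N1 N2. N1 \<in> \<N> \<Longrightarrow> N2 \<in> \<N> \<Longrightarrow> \<exists>N3\<in>\<N>. N3 \<subseteq> N1 \<inter> N2"
  shows "\<Inter>\<N> \<noteq> {}"
proof -
  define F where "F = {A. A \<subseteq> S \<and> (\<exists>N\<in>\<N>. \<forall>q\<in>N. A \<in> q)}"
  have uf: "ultrafilter_on S q" if "N \<in> \<N>" "q \<in> N" for N q
    using beta_closed_ultrafilter[OF closed] that by blast
  have "filter_on S F"
    unfolding F_def using \<open>\<N> \<noteq> {}\<close> uf nonempty directed by (rule filter_on_common_members)
  then obtain p where p: "ultrafilter_on S p" "F \<subseteq> p" using ultrafilter_exists by blast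
  have "p \<in> N" if "N \<in> \<N>" for N
  proof (rule beta_closedD[OF closed[OF that] p(1)])
    fix A assume "A \<in> p"
    show "\<exists>q\<in>N. A \<in> q"
    proof (rule ccontr)
      assume "\<not> (\<exists>q\<in>N. A \<in> q)"
      then have "\<forall>q\<in>N. S - A \<in> q"
        using uf_Diff_iff[OF uf[OF that] uf_subset[OF p(1) \<open>A \<in> p\<close>]] by blast
      then have "S - A \<in> p" using p(2) that unfolding F_def by blast
      then show False using uf_Diff_iff[OF p(1) uf_subset[OF p(1) \<open>A \<in> p\<close>]] \<open>A \<in> p\<close> by blast
    qed
  qed
  then show ?thesis by blast
qed

lemma beta_closed_image_uplus_right:
  assumes S: "add_closed S" and N: "beta_closed S N" and e: "ultrafilter_on S e"
  shows "beta_closed S ((\<lambda>q. uplus S q e) ` N)"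
proof (rule beta_closedI)
  show "ultrafilter_on S w" if "w \<in> (\<lambda>q. uplus S q e) ` N" for w
    using that ultrafilter_uplus[OF S beta_closed_ultrafilter[OF N] e] by blast
  fix p assume p: "ultrafilter_on S p"
    and near: "\<And>A. A \<in> p \<Longrightarrow> \<exists>w\<in>(\<lambda>q. uplus S q e) ` N. A \<in> w"
  define D where "D A = {s\<in>S. lshift S s A \<in> e}" for A
  have D_subset: "D A \<subseteq> S" for A unfolding D_def by blast
  have D_Int: "D (A \<inter> B) = D A \<inter> D B" for A B
    unfolding D_def lshift_Int using uf_Int_iff[OF e lshift_subset lshift_subset] by blast
  define \<N> where "\<N> = (\<lambda>A. N \<inter> {q. D A \<in> q}) ` p"
  have "\<Inter>\<N> \<noteq> {}"
  proof (rule beta_closed_Inter_nonempty)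
    show "\<N> \<noteq> {}" unfolding \<N>_def using uf_carrier[OF p] by blast
    show "beta_closed S M" if "M \<in> \<N>" for M
      using that beta_closed_Int_member[OF N D_subset] unfolding \<N>_def by blast
    show "M \<noteq> {}" if "M \<in> \<N>" for M
    proof -
      obtain A where "A \<in> p" "M = N \<inter> {q. D A \<in> q}" using \<open>M \<in> \<N>\<close> unfolding \<N>_def by blast
      moreover obtain q where "q \<in> N" "A \<in> uplus S q e" using near[OF \<open>A \<in> p\<close>] by blast
      ultimately show ?thesis unfolding uplus_iff D_def by blast
    qed
    fix M1 M2 assume "M1 \<in> \<N>" "M2 \<in> \<N>"
    then obtain A1 A2 where A: "A1 \<in> p" "A2 \<in> p" and M: "M1 = N \<inter> {q. D A1 \<in> q}" "M2 = N \<inter> {q. D A2 \<in> q}"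
      unfolding \<N>_def by blast
    have "N \<inter> {q. D (A1 \<inter> A2) \<in> q} \<in> \<N>"
      unfolding \<N>_def by (rule imageI[OF uf_Int[OF p A]])
    moreover have "N \<inter> {q. D (A1 \<inter> A2) \<in> q} \<subseteq> M1 \<inter> M2"
      unfolding M D_Int using uf_Int_iff[OF beta_closed_ultrafilter[OF N] D_subset D_subset] by blast
    ultimately show "\<exists>M3\<in>\<N>. M3 \<subseteq> M1 \<inter> M2" ..
  qed
  then obtain q where q: "q \<in> N" "\<And>A. A \<in> p \<Longrightarrow> D A \<in> q"
    using uf_carrier[OF p] unfolding \<N>_def by blast
  have "p \<subseteq> uplus S q e"
    using q(2) uf_subset[OF p] by (auto simp: uplus_iff D_def)
  then have "p = uplus S q e"
    by (rule uf_eqI[OF p ultrafilter_uplus[OF S beta_closed_ultrafilter[OF N q(1)] e]])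
  then show "p \<in> (\<lambda>q. uplus S q e) ` N" using q(1) by blast
qed

lemma beta_closed_uplus_right_fiber:
  assumes S: "add_closed S" and N: "beta_closed S N" and e: "ultrafilter_on S e"
  shows "beta_closed S {q\<in>N. uplus S q e = e}"
proof (rule beta_closedI)
  show "ultrafilter_on S q" if "q \<in> {q\<in>N. uplus S q e = e}" for q
    using that beta_closed_ultrafilter[OF N] by blast
  fix p assume p: "ultrafilter_on S p" and near: "\<And>A. A \<in> p \<Longrightarrow> \<exists>q\<in>{q\<in>N. uplus S q e = e}. A \<in> q"
  have "p \<in> N" by (rule beta_closedD[OF N p]) (use near in blast)
  have "e \<subseteq> uplus S p e"
  proof
    fix B assume "B \<in> e"
    let ?D = "{s\<in>S. lshift S s B \<in> e}"
    have "?D \<subseteq> S" by blast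
    have "?D \<in> p"
    proof (rule ccontr)
      assume "?D \<notin> p"
      then have "S - ?D \<in> p" using uf_Diff_iff[OF p \<open>?D \<subseteq> S\<close>] by simp
      then obtain q where q: "q \<in> {q\<in>N. uplus S q e = e}" "S - ?D \<in> q" using near by blast
      then have "?D \<in> q" using \<open>B \<in> e\<close> uplus_iff[of B S q e] by simp
      moreover have "ultrafilter_on S q" using q(1) beta_closed_ultrafilter[OF N] by simp
      ultimately show False using uf_Diff_iff[OF _ \<open>?D \<subseteq> S\<close>] q(2) by simp
    qed
    then show "B \<in> uplus S p e" unfolding uplus_iff using uf_subset[OF e \<open>B \<in> e\<close>] by blast
  qed
  then have "e = uplus S p e" by (rule uf_eqI[OF e ultrafilter_uplus[OF S p e]])
  then show "p \<in> {q\<in>N. uplus S q e = e}" using \<open>p \<in> N\<close> by simp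
qed

definition closed_subsemigroup :: "real set \<Rightarrow> real set set set \<Rightarrow> bool" where
  "closed_subsemigroup S N \<longleftrightarrow> N \<noteq> {} \<and> beta_closed S N \<and> (\<forall>p\<in>N. \<forall>q\<in>N. uplus S p q \<in> N)"

lemma closed_subsemigroupI:
  "N \<noteq> {} \<Longrightarrow> beta_closed S N \<Longrightarrow> (\<And>p q. p \<in> N \<Longrightarrow> q \<in> N \<Longrightarrow> uplus S p q \<in> N) \<Longrightarrow>
   closed_subsemigroup S N"
  unfolding closed_subsemigroup_def by blast

lemma closed_subsemigroupD:
  assumes "closed_subsemigroup S N"
  shows "N \<noteq> {}" "beta_closed S N" "\<And>p q. p \<in> N \<Longrightarrow> q \<in> N \<Longrightarrow> uplus S p q \<in> N"
  using assms unfolding closed_subsemigroup_def by blast+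

lemma closed_subsemigroup_Inter_chain:
  assumes "\<C> \<noteq> {}" and C: "\<And>N. N \<in> \<C> \<Longrightarrow> closed_subsemigroup S N"
    and chain: "\<And>N N'. N \<in> \<C> \<Longrightarrow> N' \<in> \<C> \<Longrightarrow> N \<subseteq> N' \<or> N' \<subseteq> N"
  shows "closed_subsemigroup S (\<Inter>\<C>)"
proof (rule closed_subsemigroupI)
  have closed: "beta_closed S N" if "N \<in> \<C>" for N
    using closed_subsemigroupD(2)[OF C[OF that]] .
  show "\<Inter>\<C> \<noteq> {}"
  proof (rule beta_closed_Inter_nonempty[OF \<open>\<C> \<noteq> {}\<close> closed])
    show "N \<noteq> {}" if "N \<in> \<C>" for N
      using closed_subsemigroupD(1)[OF C[OF that]] .
    fix N1 N2 assume "N1 \<in> \<C>" "N2 \<in> \<C>"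
    then show "\<exists>N3\<in>\<C>. N3 \<subseteq> N1 \<inter> N2"
      using chain[of N1 N2] by (metis Int_absorb1 Int_absorb2 order_refl)
  qed
  show "beta_closed S (\<Inter>\<C>)" using beta_closed_Inter[OF \<open>\<C> \<noteq> {}\<close> closed] .
  show "uplus S p q \<in> \<Inter>\<C>" if "p \<in> \<Inter>\<C>" "q \<in> \<Inter>\<C>" for p q
    using that closed_subsemigroupD(3)[OF C] by blast
qed

lemma minimal_closed_subsemigroup_exists:
  assumes M: "closed_subsemigroup S M"
  shows "\<exists>N\<subseteq>M. closed_subsemigroup S N \<and>
           (\<forall>N'. closed_subsemigroup S N' \<and> N' \<subseteq> N \<longrightarrow> N' = N)"
proof -
  let ?A = "{N. N \<subseteq> M \<and> closed_subsemigroup S N}"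
  have po: "partial_order_on ?A (relation_of (\<lambda>N N'. N' \<subseteq> N) ?A)"
    unfolding partial_order_on_def preorder_on_def refl_on_def trans_on_def antisym_on_def
      relation_of_def
    by auto
  have "\<exists>N\<in>?A. \<forall>N'\<in>?A. N' \<subseteq> N \<longrightarrow> N' = N"
  proof (rule predicate_Zorn[OF po])
    fix \<C> assume "\<C> \<in> Chains (relation_of (\<lambda>N N'. N' \<subseteq> N) ?A)"
    then have C: "\<C> \<subseteq> ?A" and chain: "\<And>N N'. N \<in> \<C> \<Longrightarrow> N' \<in> \<C> \<Longrightarrow> N \<subseteq> N' \<or> N' \<subseteq> N"
      using Chains_relation_of unfolding Chains_def relation_of_def by blast+
    show "\<exists>L\<in>?A. \<forall>N\<in>\<C>. L \<subseteq> N"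
    proof (cases "\<C> = {}")
      case True
      then show ?thesis using M by blast
    next
      case False
      have "closed_subsemigroup S (\<Inter>\<C>)"
        using C chain by (intro closed_subsemigroup_Inter_chain[OF False]) auto
      moreover have "\<Inter>\<C> \<subseteq> M" using C False by blast
      ultimately have "\<Inter>\<C> \<in> ?A" by simp
      then show ?thesis by blast
    qed
  qed
  then obtain N where "N \<in> ?A" and min: "\<forall>N'\<in>?A. N' \<subseteq> N \<longrightarrow> N' = N" ..
  then have N: "N \<subseteq> M" "closed_subsemigroup S N" by simp_all
  have "N' = N" if "closed_subsemigroup S N'" "N' \<subseteq> N" for N'
  proof -
    have "N' \<in> ?A" using that N(1) by auto
    then show ?thesis using min[rule_format] \<open>N' \<subseteq> N\<close> by simp
  qed
  then show ?thesis using N by blast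
qed

theorem closed_subsemigroup_idempotent:
  assumes S: "add_closed S" and M: "closed_subsemigroup S M"
  shows "\<exists>e\<in>M. uplus S e e = e"
proof -
  obtain N where "N \<subseteq> M" and N: "closed_subsemigroup S N"
    and minimal: "\<And>N'. closed_subsemigroup S N' \<Longrightarrow> N' \<subseteq> N \<Longrightarrow> N' = N"
    using minimal_closed_subsemigroup_exists[OF M] by blast
  note closed = closed_subsemigroupD(2)[OF N] and add = closed_subsemigroupD(3)[OF N]
  obtain e where "e \<in> N" using closed_subsemigroupD(1)[OF N] by blast
  have e: "ultrafilter_on S e" using beta_closed_ultrafilter[OF closed \<open>e \<in> N\<close>] .
  have "closed_subsemigroup S ((\<lambda>q. uplus S q e) ` N)"
  proof (rule closed_subsemigroupI)
    show "(\<lambda>q. uplus S q e) ` N \<noteq> {}" using \<open>e \<in> N\<close> by blast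
    show "beta_closed S ((\<lambda>q. uplus S q e) ` N)" by (rule beta_closed_image_uplus_right[OF S closed e])
    fix a b assume "a \<in> (\<lambda>q. uplus S q e) ` N" "b \<in> (\<lambda>q. uplus S q e) ` N"
    then obtain q1 q2 where "q1 \<in> N" "q2 \<in> N" "a = uplus S q1 e" "b = uplus S q2 e" by blast
    then have "uplus S a b = uplus S (uplus S (uplus S q1 e) q2) e" by (simp add: uplus_assoc[OF S])
    moreover have "uplus S (uplus S q1 e) q2 \<in> N" using add \<open>q1 \<in> N\<close> \<open>q2 \<in> N\<close> \<open>e \<in> N\<close> by blast
    ultimately show "uplus S a b \<in> (\<lambda>q. uplus S q e) ` N" by blast
  qed
  moreover have "(\<lambda>q. uplus S q e) ` N \<subseteq> N" using add \<open>e \<in> N\<close> by blast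
  ultimately have "(\<lambda>q. uplus S q e) ` N = N" by (rule minimal)
  then obtain q0 where "q0 \<in> N" "uplus S q0 e = e" using \<open>e \<in> N\<close> by (metis imageE)
  have "closed_subsemigroup S {q\<in>N. uplus S q e = e}"
  proof (rule closed_subsemigroupI)
    show "{q\<in>N. uplus S q e = e} \<noteq> {}" using \<open>q0 \<in> N\<close> \<open>uplus S q0 e = e\<close> by blast
    show "beta_closed S {q\<in>N. uplus S q e = e}" by (rule beta_closed_uplus_right_fiber[OF S closed e])
    fix a b assume "a \<in> {q\<in>N. uplus S q e = e}" "b \<in> {q\<in>N. uplus S q e = e}"
    then show "uplus S a b \<in> {q\<in>N. uplus S q e = e}" using add by (simp add: uplus_assoc[OF S])
  qed
  then have "{q\<in>N. uplus S q e = e} = N" by (rule minimal) blast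
  then show ?thesis using \<open>e \<in> N\<close> \<open>N \<subseteq> M\<close> by blast
qed

section \<open>Limits along ultrafilters and the maps \<open>T\<^sub>p\<close>\<close>

lemma t2_compact_point_separation:
  fixes K :: "'a::t2_space set"
  assumes "compact K" "x \<notin> K"
  obtains U V where "open U" "open V" "x \<in> U" "K \<subseteq> V" "U \<inter> V = {}"
proof -
  have "Hausdorff_space (euclidean :: 'a topology)"
    unfolding Hausdorff_space_def disjnt_def by (metis hausdorff open_openin)
  moreover have "compactin euclidean {x}" "compactin euclidean K" "disjnt {x} K"
    using assms by (auto simp: compactin_euclidean_iff)
  ultimately obtain U V where "open U" "open V" "{x} \<subseteq> U" "K \<subseteq> V" "disjnt U V"
    by (rule Hausdorff_space_compact_separation) auto
  then show ?thesis using that by (simp add: disjnt_def)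
qed

lemma plim_eqI:
  fixes f :: "real \<Rightarrow> 'a::t2_space"
  assumes p: "ultrafilter_on S p" and lim: "\<And>W. open W \<Longrightarrow> z \<in> W \<Longrightarrow> {s\<in>S. f s \<in> W} \<in> p"
  shows "plim S p f = z"
  unfolding plim_def
proof (rule the_equality)
  show "\<forall>W. open W \<and> z \<in> W \<longrightarrow> {s\<in>S. f s \<in> W} \<in> p" using lim by blast
  fix z' assume lim': "\<forall>W. open W \<and> z' \<in> W \<longrightarrow> {s\<in>S. f s \<in> W} \<in> p"
  show "z' = z"
  proof (rule ccontr)
    assume "z' \<noteq> z"
    then obtain U V where UV: "open U" "open V" "z' \<in> U" "z \<in> V" "U \<inter> V = {}"
      using hausdorff by metis
    have "{s\<in>S. f s \<in> U} \<in> p" using lim' UV(1,3) by simp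
    moreover have "{s\<in>S. f s \<in> V} \<in> p" using lim UV(2,4) by simp
    ultimately have "{s\<in>S. f s \<in> U} \<inter> {s\<in>S. f s \<in> V} \<in> p" by (rule uf_Int[OF p])
    moreover have "{s\<in>S. f s \<in> U} \<inter> {s\<in>S. f s \<in> V} = {}" using UV(5) by blast
    ultimately show False using uf_empty[OF p] by simp
  qed
qed

lemma plim_exists:
  fixes f :: "real \<Rightarrow> 'a::t2_space"
  assumes p: "ultrafilter_on S p" and X: "compact X" and f: "\<And>s. s \<in> S \<Longrightarrow> f s \<in> X"
  shows "\<exists>z\<in>X. \<forall>W. open W \<and> z \<in> W \<longrightarrow> {s\<in>S. f s \<in> W} \<in> p"
proof (rule ccontr)
  assume "\<not> ?thesis"
  then have "\<forall>z\<in>X. \<exists>W. open W \<and> z \<in> W \<and> {s\<in>S. f s \<in> W} \<notin> p" by blast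
  then have "X \<subseteq> \<Union>{W. open W \<and> {s\<in>S. f s \<in> W} \<notin> p}" by blast
  then obtain \<W> where \<W>: "\<W> \<subseteq> {W. open W \<and> {s\<in>S. f s \<in> W} \<notin> p}" "finite \<W>" "X \<subseteq> \<Union>\<W>"
    by (rule compactE[OF X]) blast
  let ?F = "(\<lambda>W. {s\<in>S. f s \<in> W}) ` \<W>"
  have "\<Union>?F = S" using \<W>(3) f by blast
  then have "\<Union>?F \<in> p" using uf_carrier[OF p] by simp
  moreover have "\<forall>A\<in>?F. A \<subseteq> S" by blast
  ultimately have "\<exists>A\<in>?F. A \<in> p" by (intro uf_finite_Union[OF p finite_imageI[OF \<W>(2)]])
  then obtain A where "A \<in> ?F" "A \<in> p" ..
  then show False using \<W>(1) by auto
qed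

lemma
  assumes "dynamical_system S X T"
  shows dynamical_system_compact: "compact X"
    and dynamical_system_continuous: "s \<in> S \<Longrightarrow> continuous_on X (T s)"
    and dynamical_system_maps: "s \<in> S \<Longrightarrow> y \<in> X \<Longrightarrow> T s y \<in> X"
    and dynamical_system_add: "s \<in> S \<Longrightarrow> t \<in> S \<Longrightarrow> y \<in> X \<Longrightarrow> T s (T t y) = T (s + t) y"
  using assms unfolding dynamical_system_def by blast+

lemma
  fixes T :: "real \<Rightarrow> 'a::t2_space \<Rightarrow> 'a"
  assumes ds: "dynamical_system S X T" and p: "ultrafilter_on S p" and x: "x \<in> X"
  shows Tp_in: "Tp S T p x \<in> X"
    and Tp_nhds: "open W \<Longrightarrow> Tp S T p x \<in> W \<Longrightarrow> {s\<in>S. T s x \<in> W} \<in> p"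
proof -
  have "\<exists>z\<in>X. \<forall>W. open W \<and> z \<in> W \<longrightarrow> {s\<in>S. T s x \<in> W} \<in> p"
    by (rule plim_exists[OF p dynamical_system_compact[OF ds]]) (rule dynamical_system_maps[OF ds _ x])
  then obtain z where "z \<in> X" and lim: "\<forall>W. open W \<and> z \<in> W \<longrightarrow> {s\<in>S. T s x \<in> W} \<in> p" ..
  moreover have "Tp S T p x = z" unfolding Tp_def by (rule plim_eqI[OF p]) (use lim in blast)
  ultimately show "Tp S T p x \<in> X" "open W \<Longrightarrow> Tp S T p x \<in> W \<Longrightarrow> {s\<in>S. T s x \<in> W} \<in> p"
    by simp_all
qed

lemma Tp_eqI:
  fixes T :: "real \<Rightarrow> 'a::t2_space \<Rightarrow> 'a"
  assumes "ultrafilter_on S p" and "\<And>W. open W \<Longrightarrow> z \<in> W \<Longrightarrow> {s\<in>S. T s x \<in> W} \<in> p"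
  shows "Tp S T p x = z"
  unfolding Tp_def using assms by (rule plim_eqI)

text \<open>In ultrafilter terms this says \<open>T\<^sub>t \<circ> T\<^sub>w = T\<^bsub>t+w\<^esub>\<close>; it is where continuity of \<open>T\<^sub>t\<close> enters.\<close>
lemma lshift_return_times:
  fixes T :: "real \<Rightarrow> 'a::t2_space \<Rightarrow> 'a"
  assumes ds: "dynamical_system S X T" and S: "add_closed S" and w: "ultrafilter_on S w"
    and x: "x \<in> X" and t: "t \<in> S" and V: "open V" and tV: "T t (Tp S T w x) \<in> V"
  shows "lshift S t {s\<in>S. T s x \<in> V} \<in> w"
proof -
  obtain A where A: "open A" "A \<inter> X = T t -` V \<inter> X"
    using dynamical_system_continuous[OF ds t] V unfolding continuous_on_open_invariant by blast
  have "Tp S T w x \<in> A" using A(2) Tp_in[OF ds w x] tV by blast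
  then have "{r\<in>S. T r x \<in> A} \<in> w" by (rule Tp_nhds[OF ds w x A(1)])
  moreover have "{r\<in>S. T r x \<in> A} \<subseteq> lshift S t {s\<in>S. T s x \<in> V}"
  proof
    fix r assume r: "r \<in> {r\<in>S. T r x \<in> A}"
    then have "T t (T r x) \<in> V" using A(2) dynamical_system_maps[OF ds _ x] by blast
    then show "r \<in> lshift S t {s\<in>S. T s x \<in> V}"
      using r add_closedD[OF S t] dynamical_system_add[OF ds t _ x] by (simp add: lshift_def)
  qed
  ultimately show ?thesis by (rule uf_mono[OF w _ _ lshift_subset])
qed

lemma lshift_return_times_disjoint:
  fixes T :: "real \<Rightarrow> 'a::t2_space \<Rightarrow> 'a"
  assumes ds: "dynamical_system S X T" and S: "add_closed S" and w: "ultrafilter_on S w"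
    and x: "x \<in> X" and t: "t \<in> S" and "open V'" "V \<inter> V' = {}"
    and ret: "lshift S t {s\<in>S. T s x \<in> V} \<in> w"
  shows "T t (Tp S T w x) \<notin> V'"
proof
  assume "T t (Tp S T w x) \<in> V'"
  then have "lshift S t {s\<in>S. T s x \<in> V'} \<in> w"
    by (rule lshift_return_times[OF ds S w x t \<open>open V'\<close>])
  with ret have "lshift S t {s\<in>S. T s x \<in> V} \<inter> lshift S t {s\<in>S. T s x \<in> V'} \<in> w"
    by (rule uf_Int[OF w])
  moreover have "lshift S t {s\<in>S. T s x \<in> V} \<inter> lshift S t {s\<in>S. T s x \<in> V'} = {}"
    using \<open>V \<inter> V' = {}\<close> unfolding lshift_def by blast
  ultimately show False using uf_empty[OF w] by simp
qed

lemma Tp_uplus: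
  fixes T :: "real \<Rightarrow> 'a::t2_space \<Rightarrow> 'a"
  assumes ds: "dynamical_system S X T" and S: "add_closed S"
    and p: "ultrafilter_on S p" and q: "ultrafilter_on S q" and x: "x \<in> X"
  shows "Tp S T (uplus S p q) x = Tp S T p (Tp S T q x)"
proof (rule Tp_eqI[OF ultrafilter_uplus[OF S p q]])
  fix W :: "'a set" assume "open W" "Tp S T p (Tp S T q x) \<in> W"
  then have "{s\<in>S. T s (Tp S T q x) \<in> W} \<in> p" by (rule Tp_nhds[OF ds p Tp_in[OF ds q x]])
  moreover have "{s\<in>S. T s (Tp S T q x) \<in> W} \<subseteq> {s\<in>S. lshift S s {s\<in>S. T s x \<in> W} \<in> q}"
    using lshift_return_times[OF ds S q x _ \<open>open W\<close>] by blast
  ultimately have "{s\<in>S. lshift S s {s\<in>S. T s x \<in> W} \<in> q} \<in> p" by (rule uf_mono[OF p]) blast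
  then show "{s\<in>S. T s x \<in> W} \<in> uplus S p q" unfolding uplus_iff by blast
qed

lemma Tp_idempotent:
  fixes T :: "real \<Rightarrow> 'a::t2_space \<Rightarrow> 'a"
  assumes ds: "dynamical_system S X T" and S: "add_closed S"
    and u: "ultrafilter_on S u" "uplus S u u = u" and y: "y \<in> X"
  shows "Tp S T u (Tp S T u y) = Tp S T u y"
  using Tp_uplus[OF ds S u(1) u(1) y] u(2) by simp

lemma beta_closed_fixers:
  fixes T :: "real \<Rightarrow> 'a::t2_space \<Rightarrow> 'a"
  assumes ds: "dynamical_system S X T" and x: "x \<in> X"
  shows "beta_closed S {q. ultrafilter_on S q \<and> Tp S T q x = x}"
proof (rule beta_closedI)
  fix p assume p: "ultrafilter_on S p"
    and near: "\<And>A. A \<in> p \<Longrightarrow> \<exists>q\<in>{q. ultrafilter_on S q \<and> Tp S T q x = x}. A \<in> q"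
  have "Tp S T p x = x"
  proof (rule Tp_eqI[OF p])
    fix W :: "'a set" assume W: "open W" "x \<in> W"
    let ?B = "{s\<in>S. T s x \<in> W}"
    show "?B \<in> p"
    proof (rule ccontr)
      assume "?B \<notin> p"
      have "?B \<subseteq> S" by blast
      with \<open>?B \<notin> p\<close> have "S - ?B \<in> p" using uf_Diff_iff[OF p] by simp
      then obtain q where q: "ultrafilter_on S q" "Tp S T q x = x" "S - ?B \<in> q" using near by blast
      then have "?B \<in> q" using Tp_nhds[OF ds q(1) x W(1)] W(2) by simp
      then show False using uf_Diff_iff[OF q(1) \<open>?B \<subseteq> S\<close>] q(3) by simp
    qed
  qed
  then show "p \<in> {q. ultrafilter_on S q \<and> Tp S T q x = x}" using p by simp
qed simp

section \<open>Minimal left ideals of \<open>O\<^sup>+(S)\<close>\<close>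

lemma
  assumes "minimal_left_ideal_of S (Oplus S) L"
  shows minimal_left_ideal_nonempty: "L \<noteq> {}"
    and minimal_left_ideal_subset: "L \<subseteq> Oplus S"
    and minimal_left_ideal_uplus: "p \<in> Oplus S \<Longrightarrow> q \<in> L \<Longrightarrow> uplus S p q \<in> L"
    and minimal_left_ideal_minimal: "left_ideal_of S (Oplus S) K \<Longrightarrow> K \<subseteq> L \<Longrightarrow> K = L"
  using assms unfolding minimal_left_ideal_of_def left_ideal_of_def by blast+

lemma minimal_left_ideal_eq_image:
  assumes S: "add_closed S" "S \<subseteq> {0<..}" and L: "minimal_left_ideal_of S (Oplus S) L" and r: "r \<in> L"
  shows "(\<lambda>q. uplus S q r) ` Oplus S = L"
proof (rule minimal_left_ideal_minimal[OF L])
  have "r \<in> Oplus S" using r minimal_left_ideal_subset[OF L] by blast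
  show "left_ideal_of S (Oplus S) ((\<lambda>q. uplus S q r) ` Oplus S)"
    unfolding left_ideal_of_def
  proof (intro conjI ballI)
    show "(\<lambda>q. uplus S q r) ` Oplus S \<noteq> {}" using \<open>r \<in> Oplus S\<close> by blast
    show "(\<lambda>q. uplus S q r) ` Oplus S \<subseteq> Oplus S" using Oplus_uplus[OF S _ \<open>r \<in> Oplus S\<close>] by blast
    fix p w assume "p \<in> Oplus S" "w \<in> (\<lambda>q. uplus S q r) ` Oplus S"
    then obtain q where "q \<in> Oplus S" "w = uplus S q r" by blast
    then have "uplus S p w = uplus S (uplus S p q) r" by (simp add: uplus_assoc[OF S(1)])
    moreover have "uplus S p q \<in> Oplus S" by (rule Oplus_uplus[OF S \<open>p \<in> Oplus S\<close> \<open>q \<in> Oplus S\<close>])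
    ultimately show "uplus S p w \<in> (\<lambda>q. uplus S q r) ` Oplus S" by simp
  qed
  show "(\<lambda>q. uplus S q r) ` Oplus S \<subseteq> L" using minimal_left_ideal_uplus[OF L _ r] by blast
qed

lemma minimal_left_ideal_beta_closed:
  assumes S: "add_closed S" "S \<subseteq> {0<..}" and L: "minimal_left_ideal_of S (Oplus S) L"
  shows "beta_closed S L"
proof -
  obtain r where "r \<in> L" using minimal_left_ideal_nonempty[OF L] by blast
  then have "ultrafilter_on S r" using minimal_left_ideal_subset[OF L] Oplus_ultrafilter by blast
  then have "beta_closed S ((\<lambda>q. uplus S q r) ` Oplus S)"
    by (rule beta_closed_image_uplus_right[OF S(1) Oplus_beta_closed])
  then show ?thesis using minimal_left_ideal_eq_image[OF S L \<open>r \<in> L\<close>] by simp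
qed

section \<open>Syndeticity near zero\<close>

lemma syndetic_near_zero_mono:
  assumes "syndetic_near_zero S D" "D \<subseteq> B"
  shows "syndetic_near_zero S B"
  unfolding syndetic_near_zero_def
proof (intro allI impI)
  fix e :: real assume "e > 0"
  then have "\<exists>F. finite F \<and> F \<noteq> {} \<and> F \<subseteq> {0<..<e} \<inter> S \<and>
      (\<exists>d>0. S \<inter> {0<..<d} \<subseteq> (\<Union>t\<in>F. lshift S t D))"
    using assms(1) unfolding syndetic_near_zero_def by simp
  then obtain F d where F: "finite F" "F \<noteq> {}" "F \<subseteq> {0<..<e} \<inter> S" and "d > 0"
    and cover: "S \<inter> {0<..<d} \<subseteq> (\<Union>t\<in>F. lshift S t D)"
    by blast
  have "S \<inter> {0<..<d} \<subseteq> (\<Union>t\<in>F. lshift S t B)"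
    using cover lshift_mono[OF assms(2)] by blast
  then show "\<exists>F. finite F \<and> F \<noteq> {} \<and> F \<subseteq> {0<..<e} \<inter> S \<and>
      (\<exists>d>0. S \<inter> {0<..<d} \<subseteq> (\<Union>t\<in>F. lshift S t B))"
    using F \<open>d > 0\<close> by blast
qed

lemma syndetic_near_zero_lshift_mem:
  assumes B: "syndetic_near_zero S B" and q: "q \<in> Oplus S" and "e > 0"
  shows "\<exists>t\<in>S \<inter> {0<..<e}. lshift S t B \<in> q"
proof -
  have "\<exists>F. finite F \<and> F \<noteq> {} \<and> F \<subseteq> {0<..<e} \<inter> S \<and>
      (\<exists>d>0. S \<inter> {0<..<d} \<subseteq> (\<Union>t\<in>F. lshift S t B))"
    using B \<open>e > 0\<close> unfolding syndetic_near_zero_def by simp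
  then obtain F d where F: "finite F" "F \<subseteq> {0<..<e} \<inter> S" and "d > 0"
    and cover: "S \<inter> {0<..<d} \<subseteq> (\<Union>t\<in>F. lshift S t B)"
    by blast
  have uq: "ultrafilter_on S q" using q by (rule Oplus_ultrafilter)
  have "S \<inter> {0<..<d} \<in> q" using q \<open>d > 0\<close> by (simp add: Oplus_iff)
  moreover have "(\<Union>t\<in>F. lshift S t B) \<subseteq> S" using lshift_subset by blast
  ultimately have "(\<Union>t\<in>F. lshift S t B) \<in> q" by (rule uf_mono[OF uq _ cover])
  then have "\<exists>A\<in>(\<lambda>t. lshift S t B) ` F. A \<in> q"
    using lshift_subset by (intro uf_finite_Union[OF uq finite_imageI[OF F(1)]]) auto
  then obtain t where "t \<in> F" "lshift S t B \<in> q" by blast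
  then show ?thesis using F(2) by blast
qed

lemma Oplus_avoiding_lshifts:
  assumes near_zero: "\<And>d. d > 0 \<Longrightarrow> S \<inter> {0<..<d} \<noteq> {}"
    and not_synd: "\<not> (\<exists>F. finite F \<and> F \<noteq> {} \<and> F \<subseteq> {0<..<e} \<inter> S \<and>
                        (\<exists>d>0. S \<inter> {0<..<d} \<subseteq> (\<Union>t\<in>F. lshift S t B)))"
  shows "\<exists>q\<in>Oplus S. \<forall>t\<in>S \<inter> {0<..<e}. lshift S t B \<notin> q"
proof -
  define gap where "gap F = S - (\<Union>t\<in>F. lshift S t B)" for F
  let ?\<G> = "{gap F | F. finite F \<and> F \<subseteq> {0<..<e} \<inter> S}"
  have "\<exists>q\<in>Oplus S. ?\<G> \<subseteq> q"
  proof (rule Oplus_ultrafilter_exists)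
    show "?\<G> \<subseteq> Pow S" unfolding gap_def by blast
    show "?\<G> \<noteq> {}" by blast
  next
    fix A and d :: real assume "A \<in> ?\<G>" "d > 0"
    then obtain F where F: "finite F" "F \<subseteq> {0<..<e} \<inter> S" "A = gap F" by blast
    show "A \<inter> {0<..<d} \<noteq> {}"
    proof
      assume "A \<inter> {0<..<d} = {}"
      then have cover: "S \<inter> {0<..<d} \<subseteq> (\<Union>t\<in>F. lshift S t B)"
        using F(3) unfolding gap_def by blast
      show False
      proof (cases "F = {}")
        case True
        then show False using near_zero[OF \<open>d > 0\<close>] cover by simp
      next
        case False
        then show False using not_synd F(1,2) cover \<open>d > 0\<close> by blast
      qed
    qed
  next
    fix A1 A2 assume "A1 \<in> ?\<G>" "A2 \<in> ?\<G>"
    then obtain F1 F2 where F: "finite F1" "F1 \<subseteq> {0<..<e} \<inter> S" "finite F2" "F2 \<subseteq> {0<..<e} \<inter> S"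
      and A: "A1 = gap F1" "A2 = gap F2"
      by blast
    have "gap (F1 \<union> F2) \<in> ?\<G>" using F by (intro CollectI exI[of _ "F1 \<union> F2"]) auto
    moreover have "gap (F1 \<union> F2) \<subseteq> A1 \<inter> A2" unfolding A gap_def by blast
    ultimately show "\<exists>A\<in>?\<G>. A \<subseteq> A1 \<inter> A2" by (rule bexI[rotated])
  qed
  then obtain q where q: "q \<in> Oplus S" "?\<G> \<subseteq> q" ..
  have "lshift S t B \<notin> q" if t: "t \<in> S \<inter> {0<..<e}" for t
  proof
    assume "lshift S t B \<in> q"
    have "gap {t} \<in> ?\<G>" using t by (intro CollectI exI[of _ "{t}"]) auto
    then have "gap {t} \<inter> lshift S t B \<in> q"
      using q(2) \<open>lshift S t B \<in> q\<close> uf_Int[OF Oplus_ultrafilter[OF q(1)]] by blast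
    moreover have "gap {t} \<inter> lshift S t B = {}" unfolding gap_def by blast
    ultimately show False using uf_empty[OF Oplus_ultrafilter[OF q(1)]] by simp
  qed
  then have "\<forall>t\<in>S \<inter> {0<..<e}. lshift S t B \<notin> q" by blast
  with q(1) show ?thesis by (rule bexI[rotated])
qed

lemma syndetic_near_zeroI:
  assumes near_zero: "\<And>d. d > 0 \<Longrightarrow> S \<inter> {0<..<d} \<noteq> {}"
    and mem: "\<And>q e. q \<in> Oplus S \<Longrightarrow> e > 0 \<Longrightarrow> \<exists>t\<in>S \<inter> {0<..<e}. lshift S t B \<in> q"
  shows "syndetic_near_zero S B"
  unfolding syndetic_near_zero_def
proof (intro allI impI)
  fix e :: real assume "e > 0"
  show "\<exists>F. finite F \<and> F \<noteq> {} \<and> F \<subseteq> {0<..<e} \<inter> S \<and> (\<exists>d>0. S \<inter> {0<..<d} \<subseteq> (\<Union>t\<in>F. lshift S t B))"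
  proof (rule ccontr)
    assume "\<not> ?thesis"
    with near_zero have "\<exists>q\<in>Oplus S. \<forall>t\<in>S \<inter> {0<..<e}. lshift S t B \<notin> q"
      by (rule Oplus_avoiding_lshifts)
    then obtain q where q: "q \<in> Oplus S" and avoid: "\<forall>t\<in>S \<inter> {0<..<e}. lshift S t B \<notin> q" ..
    obtain t where "t \<in> S \<inter> {0<..<e}" "lshift S t B \<in> q" using mem[OF q \<open>e > 0\<close>] ..
    then show False using avoid by blast
  qed
qed

lemma syndetic_directed_family_Oplus:
  assumes r: "r \<in> Oplus S" and "\<B> \<noteq> {}"
    and syndetic: "\<And>B. B \<in> \<B> \<Longrightarrow> syndetic_near_zero S B"
    and directed: "\<And>B1 B2. B1 \<in> \<B> \<Longrightarrow> B2 \<in> \<B> \<Longrightarrow> \<exists>B3\<in>\<B>. B3 \<subseteq> B1 \<inter> B2"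
  shows "\<exists>q\<in>Oplus S. \<forall>B\<in>\<B>. {t\<in>S. lshift S t B \<in> r} \<in> q"
proof -
  have ur: "ultrafilter_on S r" using r by (rule Oplus_ultrafilter)
  define G where "G B = {t\<in>S. lshift S t B \<in> r}" for B
  have G_mono: "G B \<subseteq> G B'" if "B \<subseteq> B'" for B B'
    unfolding G_def using uf_mono[OF ur _ lshift_mono[OF that] lshift_subset] by blast
  have "\<exists>q\<in>Oplus S. G ` \<B> \<subseteq> q"
  proof (rule Oplus_ultrafilter_exists)
    show "G ` \<B> \<subseteq> Pow S" unfolding G_def by blast
    show "G ` \<B> \<noteq> {}" using \<open>\<B> \<noteq> {}\<close> by blast
  next
    fix A and e :: real assume "A \<in> G ` \<B>" "e > 0"
    then obtain B where "B \<in> \<B>" "A = G B" by blast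
    obtain t where "t \<in> S \<inter> {0<..<e}" "lshift S t B \<in> r"
      using syndetic_near_zero_lshift_mem[OF syndetic[OF \<open>B \<in> \<B>\<close>] r \<open>e > 0\<close>] ..
    then show "A \<inter> {0<..<e} \<noteq> {}" unfolding \<open>A = G B\<close> G_def by blast
  next
    fix A1 A2 assume "A1 \<in> G ` \<B>" "A2 \<in> G ` \<B>"
    then obtain B1 B2 where B: "B1 \<in> \<B>" "B2 \<in> \<B>" "A1 = G B1" "A2 = G B2" by blast
    obtain B3 where "B3 \<in> \<B>" "B3 \<subseteq> B1 \<inter> B2" using directed[OF B(1,2)] ..
    then have "G B3 \<in> G ` \<B>" "G B3 \<subseteq> A1 \<inter> A2"
      unfolding B(3,4) using G_mono[of B3 B1] G_mono[of B3 B2] by auto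
    then show "\<exists>A3\<in>G ` \<B>. A3 \<subseteq> A1 \<inter> A2" by (rule bexI[rotated])
  qed
  then obtain q where "q \<in> Oplus S" "G ` \<B> \<subseteq> q" ..
  then show ?thesis by (intro bexI[of _ q]) (auto simp: G_def)
qed

section \<open>Uniformly recurrent points\<close>

lemma unif_recurrent_imp_fixed_by_minimal_left_ideal:
  fixes T :: "real \<Rightarrow> 'a::t2_space \<Rightarrow> 'a"
  assumes S: "add_closed S" and L: "minimal_left_ideal_of S (Oplus S) L"
    and rec: "unif_recurrent_near_zero S T x"
  shows "\<exists>u\<in>L. Tp S T u x = x"
proof -
  obtain r where "r \<in> L" using minimal_left_ideal_nonempty[OF L] by blast
  then have r: "r \<in> Oplus S" using minimal_left_ideal_subset[OF L] by blast
  let ?\<B> = "{{s\<in>S. T s x \<in> W} | W. open W \<and> x \<in> W}"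
  have "\<exists>q\<in>Oplus S. \<forall>B\<in>?\<B>. {t\<in>S. lshift S t B \<in> r} \<in> q"
  proof (rule syndetic_directed_family_Oplus[OF r])
    show "?\<B> \<noteq> {}" by blast
    show "syndetic_near_zero S B" if "B \<in> ?\<B>" for B
      using that rec unfolding unif_recurrent_near_zero_def by blast
    fix B1 B2 assume "B1 \<in> ?\<B>" "B2 \<in> ?\<B>"
    then obtain W1 W2 where "open W1" "x \<in> W1" "B1 = {s\<in>S. T s x \<in> W1}"
      "open W2" "x \<in> W2" "B2 = {s\<in>S. T s x \<in> W2}" by blast
    then have "{s\<in>S. T s x \<in> W1 \<inter> W2} \<in> ?\<B>" "{s\<in>S. T s x \<in> W1 \<inter> W2} \<subseteq> B1 \<inter> B2"
      by blast+
    then show "\<exists>B3\<in>?\<B>. B3 \<subseteq> B1 \<inter> B2" by (rule bexI[rotated])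
  qed
  then obtain q where q: "q \<in> Oplus S" and mem: "\<forall>B\<in>?\<B>. {t\<in>S. lshift S t B \<in> r} \<in> q" ..
  have "Tp S T (uplus S q r) x = x"
  proof (rule Tp_eqI[OF ultrafilter_uplus[OF S Oplus_ultrafilter[OF q] Oplus_ultrafilter[OF r]]])
    fix W :: "'a set" assume "open W" "x \<in> W"
    then show "{s\<in>S. T s x \<in> W} \<in> uplus S q r" using mem unfolding uplus_iff by blast
  qed
  then show ?thesis using minimal_left_ideal_uplus[OF L q \<open>r \<in> L\<close>] by blast
qed

lemma fixed_by_minimal_left_ideal_imp_idempotent:
  fixes T :: "real \<Rightarrow> 'a::t2_space \<Rightarrow> 'a"
  assumes S: "add_closed S" "S \<subseteq> {0<..}" and ds: "dynamical_system S X T"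
    and L: "minimal_left_ideal_of S (Oplus S) L" and x: "x \<in> X"
    and u: "u \<in> L" "Tp S T u x = x"
  shows "\<exists>e\<in>L. uplus S e e = e \<and> Tp S T e x = x"
proof -
  have uf: "ultrafilter_on S q" if "q \<in> L" for q
    using that minimal_left_ideal_subset[OF L] Oplus_ultrafilter by blast
  let ?M = "L \<inter> {q. ultrafilter_on S q \<and> Tp S T q x = x}"
  have "closed_subsemigroup S ?M"
  proof (rule closed_subsemigroupI)
    show "?M \<noteq> {}" using u uf by blast
    show "beta_closed S ?M"
      by (rule beta_closed_Int[OF minimal_left_ideal_beta_closed[OF S L] beta_closed_fixers[OF ds x]])
    fix p q assume "p \<in> ?M" "q \<in> ?M"
    moreover have "uplus S p q \<in> L"
      using \<open>p \<in> ?M\<close> \<open>q \<in> ?M\<close> minimal_left_ideal_subset[OF L] by (intro minimal_left_ideal_uplus[OF L]) auto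
    ultimately show "uplus S p q \<in> ?M"
      using Tp_uplus[OF ds S(1) _ _ x] ultrafilter_uplus[OF S(1)] by auto
  qed
  then show ?thesis using closed_subsemigroup_idempotent[OF S(1)] by blast
qed

lemma syndetic_near_zero_return_set:
  fixes T :: "real \<Rightarrow> 'a::t2_space \<Rightarrow> 'a"
  assumes dense: "dense_subsemigroup S" and ds: "dynamical_system S X T"
    and L: "minimal_left_ideal_of S (Oplus S) L" and u: "u \<in> L" and x: "x \<in> X"
    and V: "open V" "Tp S T u x \<in> V"
  shows "syndetic_near_zero S {z\<in>S. lshift S z {s\<in>S. T s x \<in> V} \<in> u}"
proof (rule syndetic_near_zeroI[OF dense_subsemigroupD(3)[OF dense]])
  have S: "add_closed S" "S \<subseteq> {0<..}" using dense_subsemigroupD[OF dense] by simp_all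
  have uf: "ultrafilter_on S q" if "q \<in> L" for q
    using that minimal_left_ideal_subset[OF L] Oplus_ultrafilter by blast
  let ?C = "{s\<in>S. T s x \<in> V}"
  fix q and e :: real assume q: "q \<in> Oplus S" and "e > 0"
  let ?w = "uplus S q u"
  have "?w \<in> L" by (rule minimal_left_ideal_uplus[OF L q u])
  \<comment> \<open>minimality of \<open>L\<close> gives \<open>u \<in> L = O\<^sup>+(S) + w\<close>\<close>
  then obtain p where p: "p \<in> Oplus S" "u = uplus S p ?w"
    using minimal_left_ideal_eq_image[OF S L] u by blast
  have uw: "ultrafilter_on S ?w" using uf[OF \<open>?w \<in> L\<close>] .
  have up: "ultrafilter_on S p" using p(1) by (rule Oplus_ultrafilter)
  have "Tp S T p (Tp S T ?w x) \<in> V" using V(2) Tp_uplus[OF ds S(1) up uw x] p(2) by simp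
  then have "{s\<in>S. T s (Tp S T ?w x) \<in> V} \<in> p" by (rule Tp_nhds[OF ds up Tp_in[OF ds uw x] V(1)])
  moreover have "S \<inter> {0<..<e} \<in> p" using p(1) \<open>e > 0\<close> by (simp add: Oplus_iff)
  ultimately have "{s\<in>S. T s (Tp S T ?w x) \<in> V} \<inter> (S \<inter> {0<..<e}) \<noteq> {}"
    using uf_Int[OF up] uf_nonempty[OF up] by blast
  then obtain t where t: "t \<in> S \<inter> {0<..<e}" "T t (Tp S T ?w x) \<in> V" by blast
  have "lshift S t ?C \<in> ?w" using t by (intro lshift_return_times[OF ds S(1) uw x _ V(1)]) auto
  then have "lshift S t {z\<in>S. lshift S z ?C \<in> u} \<in> q"
    using t(1) by (simp add: uplus_iff lshift_Collect_lshift[OF S(1)])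
  then show "\<exists>t\<in>S \<inter> {0<..<e}. lshift S t {z\<in>S. lshift S z ?C \<in> u} \<in> q" using t(1) by blast
qed

lemma fixed_by_minimal_left_ideal_imp_unif_recurrent:
  fixes T :: "real \<Rightarrow> 'a::t2_space \<Rightarrow> 'a"
  assumes dense: "dense_subsemigroup S" and ds: "dynamical_system S X T"
    and L: "minimal_left_ideal_of S (Oplus S) L" and x: "x \<in> X"
    and u: "u \<in> L" "Tp S T u x = x"
  shows "unif_recurrent_near_zero S T x"
  unfolding unif_recurrent_near_zero_def
proof (intro allI impI)
  have S: "add_closed S" using dense_subsemigroupD[OF dense] by simp
  have uu: "ultrafilter_on S u" using u(1) minimal_left_ideal_subset[OF L] Oplus_ultrafilter by blast
  fix W assume W: "open W \<and> x \<in> W"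
  have "compact (X - W)" using compact_diff[OF dynamical_system_compact[OF ds]] W by simp
  moreover have "x \<notin> X - W" using W by blast
  ultimately obtain V V' where V: "open V" "open V'" "x \<in> V" "X - W \<subseteq> V'" "V \<inter> V' = {}"
    by (rule t2_compact_point_separation)
  let ?D = "{z\<in>S. lshift S z {s\<in>S. T s x \<in> V} \<in> u}"
  have "syndetic_near_zero S ?D"
    using syndetic_near_zero_return_set[OF dense ds L u(1) x V(1)] u(2) V(3) by simp
  moreover have "?D \<subseteq> {s\<in>S. T s x \<in> W}"
  proof
    fix z assume "z \<in> ?D"
    then have "T z (Tp S T u x) \<notin> V'"
      by (intro lshift_return_times_disjoint[OF ds S uu x _ V(2,5)]) auto
    moreover have "z \<in> S" using \<open>z \<in> ?D\<close> by simp
    moreover have "T z x \<in> X" using dynamical_system_maps[OF ds \<open>z \<in> S\<close> x] .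
    ultimately show "z \<in> {s\<in>S. T s x \<in> W}" using u(2) V(4) by auto
  qed
  ultimately show "syndetic_near_zero S {s\<in>S. T s x \<in> W}" by (rule syndetic_near_zero_mono)
qed

theorem lemma2p7:
  fixes S :: "real set" and X :: "'a::t2_space set" and T :: "real \<Rightarrow> 'a \<Rightarrow> 'a"
    and L :: "real set set set" and x :: 'a
  assumes "dense_subsemigroup S"
    and "dynamical_system S X T"
    and "minimal_left_ideal_of S (Oplus S) L"
    and "x \<in> X"
  shows "(unif_recurrent_near_zero S T x \<longleftrightarrow> (\<exists>u\<in>L. Tp S T u x = x))
       \<and> (unif_recurrent_near_zero S T x \<longleftrightarrow>
            (\<exists>y\<in>X. \<exists>u\<in>L. uplus S u u = u \<and> Tp S T u y = x))
       \<and> (unif_recurrent_near_zero S T x \<longleftrightarrow> (\<exists>u\<in>L. uplus S u u = u \<and> Tp S T u x = x))"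
proof -
  have S: "add_closed S" "S \<subseteq> {0<..}" using dense_subsemigroupD[OF assms(1)] by simp_all
  let ?a = "unif_recurrent_near_zero S T x"
  let ?b = "\<exists>u\<in>L. Tp S T u x = x"
  let ?c = "\<exists>y\<in>X. \<exists>u\<in>L. uplus S u u = u \<and> Tp S T u y = x"
  let ?d = "\<exists>u\<in>L. uplus S u u = u \<and> Tp S T u x = x"
  have "?a \<longleftrightarrow> ?b"
    using unif_recurrent_imp_fixed_by_minimal_left_ideal[OF S(1) assms(3)]
      fixed_by_minimal_left_ideal_imp_unif_recurrent[OF assms] by blast
  moreover have "?b \<longleftrightarrow> ?d"
    using fixed_by_minimal_left_ideal_imp_idempotent[OF S assms(2-4)] by blast
  moreover have "?c \<longleftrightarrow> ?d"
  proof
    assume ?c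
    then obtain y u where y: "y \<in> X" and u: "u \<in> L" "uplus S u u = u" "Tp S T u y = x" by blast
    have "ultrafilter_on S u" using u(1) minimal_left_ideal_subset[OF assms(3)] Oplus_ultrafilter by blast
    then have "Tp S T u x = x" using Tp_idempotent[OF assms(2) S(1) _ u(2) y] u(3) by simp
    then show ?d using u(1,2) by blast
  qed (use assms(4) in blast)
  ultimately show ?thesis by blast
qed

end
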